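(* Let $\mathcal{A}\subset\mathbb{N}$ be an infinite set and, for each $n\in\mathcal{A}$, let $C_n(\mathbf{a}_n)$ be a circulant graph on $n$ vertices. Then there exists a sequence $\{\mathcal{B}_n\}_{n\in\mathcal{A}}$, where each $\mathcal{B}_n$ is an orthonormal basis of $\mathbb{C}^n$ consisting of eigenvectors of $A(C_n(\mathbf{a}_n))$, with the following property. For every $p\in[0,1]$, every sequence of vertex subsets $S_n\subset\{0,\dots,n-1\}$ with $\lim_{n\to\infty}|S_n|/n=p$, and every sequence $\varphi_n\in\mathcal{B}_n$, we have $$\lim_{n\to\infty}\mu_{\varphi_n}(S_n)=p.$$
   Context: A circulant graph $C_n(a_1,\dots,a_m)$, with integers $1\le a_1<\dots<a_m\le n/2$, has vertex set $V=\{0,1,\dots,n-1\}$, and $i\sim j$ if and only if $i-j\equiv \pm a_k \pmod n$ for some $k\in\{1,\dots,m\}$. We write $\mathbf{a}=(a_1,\dots,a_m)$. Its adjacency matrix $A(C_n(\mathbf{a}))$ is the $n\times n$ matrix with $A_{ij}=1$ if $i\sim j$ and $A_{ij}=0$ otherwise. For a vector $\psi\in\mathbb{C}^n$ with $\|\psi\|_{\ell^2}=1$, the probability measure on the vertices is $\mu_\psi=\sum_{v\in V}|\psi(v)|^2\delta_v$, so that $\mu_\psi(S)=\sum_{v\in S}|\psi(v)|^2$ for $S\subset V$. *)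

theory Defs
  imports "HOL-Analysis.Analysis"
begin

text \<open>Vectors in C^n are represented as functions nat => complex vanishing outside {0..<n}.\<close>

text \<open>The step set {a_1,...,a_m} of a circulant graph C_n(a_1,...,a_m): 1 <= a_1 < ... < a_m <= n/2.\<close>
definition circulant_steps :: "nat \<Rightarrow> nat set \<Rightarrow> bool" where
  "circulant_steps n a \<longleftrightarrow> finite a \<and> a \<noteq> {} \<and> a \<subseteq> {1..n div 2}"

definition circ_adj :: "nat \<Rightarrow> nat set \<Rightarrow> nat \<Rightarrow> nat \<Rightarrow> complex" where
  "circ_adj n a i j =
     (if \<exists>k\<in>a. (int i - int j) mod int n = int k mod int n
              \<or> (int i - int j) mod int n = (- int k) mod int n then 1 else 0)"

definition cvec :: "nat \<Rightarrow> (nat \<Rightarrow> complex) \<Rightarrow> bool" where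
  "cvec n v \<longleftrightarrow> (\<forall>i\<ge>n. v i = 0)"

definition cinner :: "nat \<Rightarrow> (nat \<Rightarrow> complex) \<Rightarrow> (nat \<Rightarrow> complex) \<Rightarrow> complex" where
  "cinner n v w = (\<Sum>i<n. v i * cnj (w i))"

definition is_eigenvector :: "nat \<Rightarrow> (nat \<Rightarrow> nat \<Rightarrow> complex) \<Rightarrow> (nat \<Rightarrow> complex) \<Rightarrow> bool" where
  "is_eigenvector n M v \<longleftrightarrow> cvec n v \<and> (\<exists>i<n. v i \<noteq> 0) \<and>
     (\<exists>ev. \<forall>i<n. (\<Sum>j<n. M i j * v j) = ev * v i)"

definition orthonormal_basis :: "nat \<Rightarrow> (nat \<Rightarrow> complex) set \<Rightarrow> bool" where
  "orthonormal_basis n B \<longleftrightarrow> finite B \<and>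
     (\<forall>v\<in>B. cvec n v \<and> cinner n v v = 1) \<and>
     (\<forall>v\<in>B. \<forall>w\<in>B. v \<noteq> w \<longrightarrow> cinner n v w = 0) \<and>
     (\<forall>x. cvec n x \<longrightarrow> (\<exists>c. x = (\<lambda>i. \<Sum>v\<in>B. c v * v i)))"

definition orthonormal_eigenbasis :: "nat \<Rightarrow> (nat \<Rightarrow> nat \<Rightarrow> complex) \<Rightarrow> (nat \<Rightarrow> complex) set \<Rightarrow> bool" where
  "orthonormal_eigenbasis n M B \<longleftrightarrow> orthonormal_basis n B \<and> (\<forall>v\<in>B. is_eigenvector n M v)"

definition vmeasure :: "(nat \<Rightarrow> complex) \<Rightarrow> nat set \<Rightarrow> real" where
  "vmeasure \<psi> S = (\<Sum>v\<in>S. (cmod (\<psi> v))^2)"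

end

theory Submission
  imports Defs
begin

text \<open>The discrete Fourier vectors \<open>e_k(j) = \<omega>^(jk) / sqrt n\<close> with \<open>\<omega> = exp(2\<pi>i/n)\<close>
  form one orthonormal eigenbasis for every circulant matrix of size \<open>n\<close>, whatever its steps.
  All entries of every \<open>e_k\<close> have modulus \<open>1 / sqrt n\<close>, so \<open>\<mu>(S) = |S|/n\<close> holds exactly
  for every eigenvector in the basis and the limit statement is immediate.\<close>

definition circulant :: "nat \<Rightarrow> (nat \<Rightarrow> nat \<Rightarrow> complex) \<Rightarrow> bool" where
  "circulant n M \<longleftrightarrow> (\<exists>c. \<forall>i<n. \<forall>j<n. M i j = c ((int i - int j) mod int n))"

definition fourier_vec :: "nat \<Rightarrow> nat \<Rightarrow> nat \<Rightarrow> complex" where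
  "fourier_vec n k i =
     (if i < n then cis (2*pi*real k*real i/real n) / complex_of_real (sqrt (real n)) else 0)"

lemma circulant_circ_adj: "circulant n (circ_adj n a)"
  unfolding circulant_def circ_adj_def
  by (rule exI[of _ "\<lambda>m. if \<exists>k\<in>a. m = int k mod int n \<or> m = (- int k) mod int n then 1 else 0"])
     simp

lemma sum_roots_of_unity_eq_0:
  fixes m :: int
  assumes n: "n > 0" and ndvd: "\<not> int n dvd m"
  shows "(\<Sum>k<n. cis (2*pi*real k* of_int m/real n)) = 0"
proof -
  define w where "w = cis (2*pi* of_int m/real n)"
  have pow: "w ^ k = cis (2*pi*real k* of_int m/real n)" for k
  proof -
    have "w ^ k = cis (real k * (2*pi* of_int m/real n))" by (simp only: w_def Complex.DeMoivre)
    also have "real k * (2*pi* of_int m/real n) = 2*pi*real k* of_int m/real n" by simp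
    finally show ?thesis .
  qed
  have "w \<noteq> 1"
  proof
    assume "w = 1"
    then obtain t :: int where "2*pi* of_int m/real n = of_int t*2*pi"
      by (auto simp: w_def complex_eq_iff cos_one_2pi_int)
    with n have "of_int m = real n * of_int t" by (simp add: field_simps)
    hence "m = int n * t" by (metis of_int_eq_iff of_int_mult of_int_of_nat_eq)
    with ndvd show False by simp
  qed
  moreover have "w ^ n = 1"
  proof -
    have "2*pi*real n* of_int m/real n = 2*pi* of_int m" using n by simp
    with pow[of n] have "w ^ n = cis (2*pi* of_int m)" by simp
    also have "\<dots> = 1" by (rule cis_multiple_2pi) simp
    finally show ?thesis .
  qed
  ultimately show ?thesis
    by (simp add: pow[symmetric] geometric_sum)
qed

lemma sum_cis_orthogonality:
  assumes n: "n > 0" and k: "k < n" and l: "l < n"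
  shows "(\<Sum>i<n. cis (2*pi*real i* of_int (int k - int l)/real n)) = (if k = l then of_nat n else 0)"
proof (cases "k = l")
  case False
  have "\<not> int n dvd (int k - int l)"
  proof
    assume "int n dvd (int k - int l)"
    then obtain t where t: "int k - int l = int n * t" by blast
    with False have "t \<noteq> 0" by auto
    hence "1 \<le> \<bar>t\<bar>" by linarith
    hence "int n \<le> \<bar>int n * t\<bar>"
      by (simp add: abs_mult mult_le_cancel_left1)
    with t k l show False by linarith
  qed
  from sum_roots_of_unity_eq_0[OF n this] False show ?thesis by simp
qed simp

lemma cis_2pi_mod:
  fixes m :: int
  assumes n: "n > 0"
  shows "cis (2*pi*real k* of_int (m mod int n)/real n) = cis (2*pi*real k* of_int m/real n)"
proof -
  have "real_of_int m = of_int (m mod int n) + real n * of_int (m div int n)"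
    by (metis mod_mult_div_eq add.commute of_int_add of_int_mult of_int_of_nat_eq)
  with n have "2*pi*real k* of_int m/real n
      = 2*pi*real k* of_int (m mod int n)/real n + 2*pi* of_int (int k*(m div int n))"
    by (simp add: field_simps)
  hence "cis (2*pi*real k* of_int m/real n)
      = cis (2*pi*real k* of_int (m mod int n)/real n) * cis (2*pi* of_int (int k*(m div int n)))"
    by (simp only: cis_mult)
  also have "cis (2*pi* of_int (int k*(m div int n))) = 1"
    by (rule cis_multiple_2pi) simp
  finally show ?thesis by simp
qed

lemma sum_lessThan_periodic_diff:
  fixes g :: "int \<Rightarrow> 'a::comm_monoid_add"
  assumes n: "n > 0" and periodic: "\<And>m. g (m mod int n) = g m" and i: "i < n"
  shows "(\<Sum>j<n. g (int i - int j)) = (\<Sum>d<n. g (int d))"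
proof -
  define r where "r j = nat ((int i - int j) mod int n)" for j
  have r_inv: "r (r j) = j" if "j < n" for j
  proof -
    have "int (r j) = (int i - int j) mod int n" using n by (simp add: r_def)
    hence "(int i - int (r j)) mod int n = int j"
      using that by (simp add: mod_diff_right_eq)
    thus ?thesis by (simp add: r_def)
  qed
  have "r ` {..<n} \<subseteq> {..<n}" using n by (auto simp: r_def nat_less_iff)
  hence bij: "bij_betw r {..<n} {..<n}"
    by (intro bij_betw_byWitness[where f'=r]) (auto simp: r_inv)
  have "(\<Sum>j<n. g (int i - int j)) = (\<Sum>j<n. g (int (r j)))"
    using n by (intro sum.cong refl) (simp add: r_def periodic)
  also have "\<dots> = (\<Sum>d<n. g (int d))"
    by (rule sum.reindex_bij_betw[OF bij])
  finally show ?thesis .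
qed

lemma fourier_vec_mult_cnj:
  assumes "i < n" and "j < n"
  shows "fourier_vec n k i * cnj (fourier_vec n l j)
       = cis (2*pi*real k*real i/real n - 2*pi*real l*real j/real n) / of_real (real n)"
proof -
  have sqrt: "complex_of_real (sqrt (real n)) * complex_of_real (sqrt (real n)) = of_real (real n)"
    by (simp flip: of_real_mult)
  have "fourier_vec n k i * cnj (fourier_vec n l j)
      = cis (2*pi*real k*real i/real n) * cis (- (2*pi*real l*real j/real n))
        / (complex_of_real (sqrt (real n)) * complex_of_real (sqrt (real n)))"
    using assms by (simp add: fourier_vec_def cis_cnj)
  also have "\<dots> = cis (2*pi*real k*real i/real n - 2*pi*real l*real j/real n) / of_real (real n)"
    by (simp only: sqrt cis_mult diff_conv_add_uminus)
  finally show ?thesis .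
qed

lemma cinner_fourier_vec:
  assumes n: "n > 0" and "k < n" and "l < n"
  shows "cinner n (fourier_vec n k) (fourier_vec n l) = (if k = l then 1 else 0)"
proof -
  have "cinner n (fourier_vec n k) (fourier_vec n l)
      = (\<Sum>i<n. cis (2*pi*real i* of_int (int k - int l)/real n)) / of_real (real n)"
    unfolding cinner_def sum_divide_distrib
    by (intro sum.cong refl)
       (simp add: fourier_vec_mult_cnj diff_divide_distrib[symmetric] algebra_simps)
  with sum_cis_orthogonality[OF assms] n show ?thesis by simp
qed

lemma sum_fourier_vec_cnj_mult:
  assumes n: "n > 0" and "i < n" and "j < n"
  shows "(\<Sum>k<n. cnj (fourier_vec n k j) * fourier_vec n k i) = (if i = j then 1 else 0)"
proof -
  have "(\<Sum>k<n. cnj (fourier_vec n k j) * fourier_vec n k i)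
      = (\<Sum>k<n. cis (2*pi*real k* of_int (int i - int j)/real n)) / of_real (real n)"
    unfolding sum_divide_distrib
    by (intro sum.cong refl)
       (simp add: assms mult.commute[of "cnj _"] fourier_vec_mult_cnj
                  diff_divide_distrib[symmetric] algebra_simps)
  with sum_cis_orthogonality[OF assms] n show ?thesis by (simp add: mult.commute)
qed

lemma fourier_vec_expansion:
  assumes n: "n > 0" and x: "cvec n x"
  shows "x i = (\<Sum>k<n. cinner n x (fourier_vec n k) * fourier_vec n k i)"
proof (cases "i < n")
  case True
  have "(\<Sum>k<n. cinner n x (fourier_vec n k) * fourier_vec n k i)
      = (\<Sum>j<n. x j * (\<Sum>k<n. cnj (fourier_vec n k j) * fourier_vec n k i))"
    unfolding cinner_def sum_distrib_right sum_distrib_left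
    by (subst sum.swap) (simp add: mult.assoc)
  also have "\<dots> = x i"
    using True by (simp add: sum_fourier_vec_cnj_mult[OF n True] if_distrib cong: if_cong)
  finally show ?thesis by simp
next
  case False
  with x show ?thesis by (simp add: cvec_def fourier_vec_def)
qed

lemma inj_on_fourier_vec:
  assumes n: "n > 0"
  shows "inj_on (fourier_vec n) {..<n}"
proof (rule inj_onI)
  fix k l assume "k \<in> {..<n}" "l \<in> {..<n}" and eq: "fourier_vec n k = fourier_vec n l"
  with cinner_fourier_vec[OF n, of k l] cinner_fourier_vec[OF n, of k k] show "k = l"
    by (simp split: if_splits)
qed

lemma orthonormal_basis_fourier:
  assumes n: "n > 0"
  shows "orthonormal_basis n (fourier_vec n ` {..<n})"
  unfolding orthonormal_basis_def
proof (intro conjI ballI allI impI)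
  show "finite (fourier_vec n ` {..<n})" by simp
next
  fix v assume "v \<in> fourier_vec n ` {..<n}"
  then obtain k where "k < n" "v = fourier_vec n k" by auto
  then show "cvec n v" and "cinner n v v = 1"
    by (simp_all add: cvec_def fourier_vec_def cinner_fourier_vec[OF n])
next
  fix v w assume "v \<in> fourier_vec n ` {..<n}" "w \<in> fourier_vec n ` {..<n}" "v \<noteq> w"
  then obtain k l where "k < n" "l < n" "v = fourier_vec n k" "w = fourier_vec n l" "k \<noteq> l"
    by auto
  then show "cinner n v w = 0" by (simp add: cinner_fourier_vec[OF n])
next
  fix x assume "cvec n x"
  then have "x = (\<lambda>i. \<Sum>k<n. cinner n x (fourier_vec n k) * fourier_vec n k i)"
    using fourier_vec_expansion[OF n] by blast
  then have "x = (\<lambda>i. \<Sum>v\<in>fourier_vec n ` {..<n}. cinner n x v * v i)"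
    by (simp add: sum.reindex[OF inj_on_fourier_vec[OF n]])
  then show "\<exists>c. x = (\<lambda>i. \<Sum>v\<in>fourier_vec n ` {..<n}. c v * v i)" by blast
qed

lemma circulant_mult_fourier_vec:
  assumes n: "n > 0" and "circulant n M"
  obtains ev where "\<And>i. i < n \<Longrightarrow> (\<Sum>j<n. M i j * fourier_vec n k j) = ev * fourier_vec n k i"
proof -
  obtain c where M: "\<And>i j. i < n \<Longrightarrow> j < n \<Longrightarrow> M i j = c ((int i - int j) mod int n)"
    using assms(2) unfolding circulant_def by blast
  define g where "g m = c (m mod int n) * cis (2*pi*real k* of_int (- m)/real n)" for m
  have periodic: "g (m mod int n) = g m" for m
    using cis_2pi_mod[OF n, of k "- (m mod int n)"] cis_2pi_mod[OF n, of k "- m"]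
    by (simp add: g_def mod_minus_eq)
  have term_eq: "M i j * fourier_vec n k j = fourier_vec n k i * g (int i - int j)"
    if "i < n" "j < n" for i j
  proof -
    have "2*pi*real k*real i/real n + 2*pi*real k* of_int (- (int i - int j))/real n
        = 2*pi*real k*real j/real n"
      by (simp add: add_divide_distrib[symmetric] algebra_simps)
    then have "cis (2*pi*real k*real i/real n) * cis (2*pi*real k* of_int (- (int i - int j))/real n)
        = cis (2*pi*real k*real j/real n)"
      by (simp only: cis_mult)
    with that show ?thesis
      by (simp add: M fourier_vec_def g_def)
  qed
  have "(\<Sum>j<n. M i j * fourier_vec n k j) = (\<Sum>d<n. g (int d)) * fourier_vec n k i"
    if i: "i < n" for i
    using sum_lessThan_periodic_diff[where g=g, OF n periodic i]
    by (simp add: term_eq[OF i] sum_distrib_left[symmetric] mult.commute)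
  then show ?thesis by (rule that)
qed

lemma is_eigenvector_fourier_vec:
  assumes "n > 0" and "circulant n M"
  shows "is_eigenvector n M (fourier_vec n k)"
proof -
  have "fourier_vec n k 0 \<noteq> 0" using \<open>n > 0\<close> by (simp add: fourier_vec_def)
  with circulant_mult_fourier_vec[OF assms, of k] show ?thesis
    unfolding is_eigenvector_def cvec_def using \<open>n > 0\<close>
    by (auto simp: fourier_vec_def)
qed

lemma orthonormal_eigenbasis_fourier:
  assumes "n > 0" and "circulant n M"
  shows "orthonormal_eigenbasis n M (fourier_vec n ` {..<n})"
  using assms
  by (auto simp: orthonormal_eigenbasis_def orthonormal_basis_fourier is_eigenvector_fourier_vec)

lemma vmeasure_fourier_basis:
  assumes "n > 0" and "\<psi> \<in> fourier_vec n ` {..<n}" and "S \<subseteq> {..<n}"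
  shows "vmeasure \<psi> S = real (card S) / real n"
proof -
  have "(cmod (\<psi> v))^2 = 1 / real n" if "v \<in> S" for v
    using that assms by (auto simp: fourier_vec_def norm_divide power_divide)
  then show ?thesis by (simp add: vmeasure_def)
qed

lemma circulant_steps_pos: "circulant_steps n a \<Longrightarrow> n > 0"
  unfolding circulant_steps_def by fastforce

theorem proposition1:
  fixes A :: "nat set" and a :: "nat \<Rightarrow> nat set"
  assumes "infinite A"
    and "\<forall>n\<in>A. circulant_steps n (a n)"
  shows "\<exists>B :: nat \<Rightarrow> (nat \<Rightarrow> complex) set.
           (\<forall>n\<in>A. orthonormal_eigenbasis n (circ_adj n (a n)) (B n)) \<and>
           (\<forall>(p::real) (S :: nat \<Rightarrow> nat set) (\<phi> :: nat \<Rightarrow> nat \<Rightarrow> complex).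
              0 \<le> p \<and> p \<le> 1 \<and> (\<forall>n\<in>A. S n \<subseteq> {..<n}) \<and>
              ((\<lambda>n. real (card (S n)) / real n) \<longlongrightarrow> p) (inf sequentially (principal A)) \<and>
              (\<forall>n\<in>A. \<phi> n \<in> B n)
              \<longrightarrow> ((\<lambda>n. vmeasure (\<phi> n) (S n)) \<longlongrightarrow> p) (inf sequentially (principal A)))"
proof (intro exI[of _ "\<lambda>n. fourier_vec n ` {..<n}"] conjI ballI allI impI)
  have pos: "n > 0" if "n \<in> A" for n
    using assms(2) that circulant_steps_pos by blast
  show "orthonormal_eigenbasis n (circ_adj n (a n)) (fourier_vec n ` {..<n})" if "n \<in> A" for n
    using orthonormal_eigenbasis_fourier[OF pos[OF that] circulant_circ_adj] .
  fix p :: real and S :: "nat \<Rightarrow> nat set" and \<phi> :: "nat \<Rightarrow> nat \<Rightarrow> complex"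
  assume "0 \<le> p \<and> p \<le> 1 \<and> (\<forall>n\<in>A. S n \<subseteq> {..<n}) \<and>
            ((\<lambda>n. real (card (S n)) / real n) \<longlongrightarrow> p) (inf sequentially (principal A)) \<and>
            (\<forall>n\<in>A. \<phi> n \<in> fourier_vec n ` {..<n})"
  then have S: "\<forall>n\<in>A. S n \<subseteq> {..<n}"
    and lim: "((\<lambda>n. real (card (S n)) / real n) \<longlongrightarrow> p) (inf sequentially (principal A))"
    and \<phi>: "\<forall>n\<in>A. \<phi> n \<in> fourier_vec n ` {..<n}"
    by blast+
  have "vmeasure (\<phi> n) (S n) = real (card (S n)) / real n" if "n \<in> A" for n
    using that S \<phi> by (simp add: pos vmeasure_fourier_basis)
  then have "eventually (\<lambda>n. real (card (S n)) / real n = vmeasure (\<phi> n) (S n))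
               (inf sequentially (principal A))"
    by (simp add: eventually_inf_principal)
  with lim show "((\<lambda>n. vmeasure (\<phi> n) (S n)) \<longlongrightarrow> p) (inf sequentially (principal A))"
    by (rule Lim_transform_eventually)
qed

end
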